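(* Let $r\ge2$ be an integer and $c\ge\frac1{r-1}$ a real number. Then $|\mathcal Q^c_n|=n^{(r-1)(c+o(1))n}$ and $|\mathcal S^c_n|=n^{(r-1)(c+o(1))n}$.
   Context: All hypergraphs are finite $r$-uniform hypergraphs $G=(V,E)$ with $E\subseteq\binom Vr$; $v(G)=|V|$, $e(G)=|E|$; $H\subseteq G$ means $H$ is an induced subhypergraph $G[U]=(U,E\cap\binom Ur)$ for some $U\subseteq V$. $\mathcal Q^c$ is the class of $G$ such that $e(H)\le c\,v(H)$ for every $H\subseteq G$; $\mathcal S^c$ is the class of $G$ with $e(G)\le c\,v(G)$. For a class $\mathcal P$, $\mathcal P_n$ is the set of its members with vertex set $[n]$. *)

theory Defs
  imports Complex_Main
begin

definition hypergraphs_on :: "nat \<Rightarrow> nat \<Rightarrow> nat set set set" where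
  "hypergraphs_on r n = {E. E \<subseteq> {S. S \<subseteq> {1..n} \<and> card S = r}}"

definition induced_edges :: "nat set set \<Rightarrow> nat set \<Rightarrow> nat set set" where
  "induced_edges E U = {e \<in> E. e \<subseteq> U}"

definition Q_class :: "nat \<Rightarrow> real \<Rightarrow> nat \<Rightarrow> nat set set set" where
  "Q_class r c n = {E \<in> hypergraphs_on r n.
     \<forall>U. U \<subseteq> {1..n} \<longrightarrow> real (card (induced_edges E U)) \<le> c * real (card U)}"

definition S_class :: "nat \<Rightarrow> real \<Rightarrow> nat \<Rightarrow> nat set set set" where
  "S_class r c n = {E \<in> hypergraphs_on r n. real (card E) \<le> c * real n}"

end

theory Submission
  imports Defs "HOL-Combinatorics.Permutations" "HOL-Library.FuncSet"
begin

text \<open>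
  A hypergraph in S^c_n is a set of at most cn of the at most n^r possible edges, so there are at
  most the sum over k \<le> cn of n^(rk)/k!, which is at most n^((r-1)cn) e^n.

  For the lower bound take a template r-graph T on q vertices with about cq edges and a
  fractional orientation of load c: every edge spreads weight 1 over its vertices and every vertex
  receives at most c, which forces e(H) \<le> c v(H) for every induced subhypergraph H. Blow up each
  template vertex into a block of s = \<lfloor>n/q\<rfloor> vertices and each template edge into s disjoint
  edges that match the blocks through permutations. The (s!)^((r-1) e(T)) = n^((r-1)(c-o(1))n)
  blow-ups are distinct and inherit the fractional orientation, so they lie in Q^c_n. In the
  template, edge j covers the unit cells met by the interval [j/c, (j+1)/c], weighted by the
  lengths of the overlaps; there are at most r such cells since 1/c \<le> r - 1.
\<close>

section \<open>Upper bound\<close>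

lemma sum_power_div_fact_le_exp:
  fixes x :: real
  assumes "0 \<le> x" "finite I"
  shows "(\<Sum>k\<in>I. x ^ k / fact k) \<le> exp x"
proof -
  have "(\<Sum>k\<in>I. inverse (fact k) * x ^ k) \<le> (\<Sum>k. inverse (fact k) * x ^ k)"
    using assms by (intro sum_le_suminf[OF summable_exp]) auto
  then show ?thesis
    by (simp add: exp_def divide_inverse mult.commute)
qed

lemma ln_fact_ge: "real s * ln (real s) - real s \<le> ln (fact s)"
proof (cases "s = 0")
  case False
  have "real s ^ s / fact s \<le> exp (real s)"
    using sum_power_div_fact_le_exp[of "real s" "{s}"] by simp
  then have "ln (real s ^ s / fact s) \<le> ln (exp (real s))"
    using False by (subst ln_le_cancel_iff) auto
  moreover have "ln (real s ^ s / fact s) = real s * ln (real s) - ln (fact s)"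
    using False by (simp add: ln_div ln_realpow)
  ultimately show ?thesis by simp
qed simp

lemma binomial_le_pow_div_fact: "real (N choose k) \<le> real N ^ k / fact k"
proof -
  have "real (N choose k) * fact k \<le> real N ^ k"
    using binomial_fact_pow[of N k] by (metis of_nat_fact of_nat_le_iff of_nat_mult of_nat_power)
  then show ?thesis
    by (simp add: pos_le_divide_eq)
qed

lemma card_subsets_card_le:
  assumes "finite A"
  shows "card {E. E \<subseteq> A \<and> card E \<le> m} \<le> (\<Sum>k\<le>m. card A choose k)"
proof -
  have "{E. E \<subseteq> A \<and> card E \<le> m} = (\<Union>k\<le>m. {E. E \<subseteq> A \<and> card E = k})"
    by auto
  also have "card \<dots> \<le> (\<Sum>k\<le>m. card {E. E \<subseteq> A \<and> card E = k})"
    by (rule card_UN_le) auto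
  also have "\<dots> = (\<Sum>k\<le>m. card A choose k)"
    using n_subsets[OF assms] by simp
  finally show ?thesis .
qed

lemma card_S_class_le:
  assumes "r \<ge> 1" and "n \<ge> 1"
  shows "real (card (S_class r c n)) \<le> real n ^ ((r - 1) * nat \<lfloor>c * real n\<rfloor>) * exp (real n)"
proof -
  define A where "A = {S. S \<subseteq> {1..n} \<and> card S = r}"
  define m where "m = nat \<lfloor>c * real n\<rfloor>"
  have finA: "finite A"
    unfolding A_def by (rule finite_subset[of _ "Pow {1..n}"]) auto
  have "card A = n choose r"
    using n_subsets[of "{1..n}" r] unfolding A_def by simp
  then have cardA: "card A \<le> n ^ r"
    using binomial_le_pow[of r n] binomial_eq_0[of n r] by (cases "r \<le> n") simp_all
  have "S_class r c n \<subseteq> {E. E \<subseteq> A \<and> card E \<le> m}"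
    unfolding S_class_def hypergraphs_on_def A_def m_def by (auto simp: le_nat_floor)
  then have "card (S_class r c n) \<le> card {E. E \<subseteq> A \<and> card E \<le> m}"
    using finA by (intro card_mono) auto
  also have "\<dots> \<le> (\<Sum>k\<le>m. card A choose k)"
    by (rule card_subsets_card_le[OF finA])
  finally have "real (card (S_class r c n)) \<le> (\<Sum>k\<le>m. real (card A choose k))"
    by (simp flip: of_nat_sum)
  also have "\<dots> \<le> (\<Sum>k\<le>m. real n ^ ((r - 1) * m) * (real n ^ k / fact k))"
  proof (rule sum_mono)
    fix k assume "k \<in> {..m}"
    have "real (card A) ^ k \<le> real n ^ (r * k)"
      using cardA by (simp add: power_mult power_mono flip: of_nat_power of_nat_le_iff)
    also have "\<dots> = real n ^ ((r - 1) * k) * real n ^ k"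
    proof -
      have "r * k = (r - 1) * k + k"
        using assms by (simp add: diff_mult_distrib)
      then show ?thesis by (simp add: power_add)
    qed
    also have "\<dots> \<le> real n ^ ((r - 1) * m) * real n ^ k"
      using \<open>k \<in> {..m}\<close> assms by (intro mult_right_mono power_increasing) auto
    finally show "real (card A choose k) \<le> real n ^ ((r - 1) * m) * (real n ^ k / fact k)"
      using binomial_le_pow_div_fact[of "card A" k] by (simp add: divide_right_mono order_trans)
  qed
  also have "\<dots> = real n ^ ((r - 1) * m) * (\<Sum>k\<le>m. real n ^ k / fact k)"
    by (simp add: sum_distrib_left)
  also have "\<dots> \<le> real n ^ ((r - 1) * m) * exp (real n)"
    by (intro mult_left_mono sum_power_div_fact_le_exp) auto
  finally show ?thesis unfolding m_def .
qed

section \<open>Fractional orientations\<close>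

definition fractional_orientation :: "'a set set \<Rightarrow> real \<Rightarrow> ('a set \<Rightarrow> 'a \<Rightarrow> real) \<Rightarrow> bool" where
  "fractional_orientation E c w \<longleftrightarrow>
     (\<forall>X\<in>E. \<forall>x\<in>X. 0 \<le> w X x) \<and> (\<forall>X\<in>E. (\<Sum>x\<in>X. w X x) = 1) \<and>
     (\<forall>x. (\<Sum>X | X \<in> E \<and> x \<in> X. w X x) \<le> c)"

lemma card_induced_edges_le_if_fractional_orientation:
  assumes "finite E" "finite U" "fractional_orientation E c w"
  shows "real (card (induced_edges E U)) \<le> c * real (card U)"
proof -
  define F where "F = induced_edges E U"
  have F: "finite F" "F \<subseteq> E" "\<And>X. X \<in> F \<Longrightarrow> X \<subseteq> U"
    using assms(1) unfolding F_def induced_edges_def by auto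
  have w: "\<And>X x. X \<in> E \<Longrightarrow> x \<in> X \<Longrightarrow> 0 \<le> w X x" "\<And>X. X \<in> E \<Longrightarrow> (\<Sum>x\<in>X. w X x) = 1"
    "\<And>x. (\<Sum>X | X \<in> E \<and> x \<in> X. w X x) \<le> c"
    using assms(3) unfolding fractional_orientation_def by auto
  have "real (card F) = (\<Sum>X\<in>F. \<Sum>x\<in>X. w X x)"
    using F w(2) by (simp add: subset_iff)
  also have "\<dots> = (\<Sum>X\<in>F. \<Sum>x | x \<in> U \<and> x \<in> X. w X x)"
    using F(3) by (intro sum.cong refl arg_cong[where f = "sum _"]) blast
  also have "\<dots> = (\<Sum>x\<in>U. \<Sum>X | X \<in> F \<and> x \<in> X. w X x)"
    by (rule sum.swap_restrict[OF F(1) assms(2)])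
  also have "\<dots> \<le> (\<Sum>x\<in>U. \<Sum>X | X \<in> E \<and> x \<in> X. w X x)"
    using F w(1) assms(1) by (intro sum_mono sum_mono2) auto
  also have "\<dots> \<le> (\<Sum>x\<in>U. c)"
    by (intro sum_mono w(3))
  finally show ?thesis
    unfolding F_def by (simp add: mult.commute)
qed

lemma fractional_orientation_pullback:
  assumes "fractional_orientation F c w" "finite F"
    and "\<And>X. X \<in> E \<Longrightarrow> \<phi> ` X \<in> F \<and> inj_on \<phi> X"
    and "\<And>x. inj_on (image \<phi>) {X \<in> E. x \<in> X}"
  shows "fractional_orientation E c (\<lambda>X x. w (\<phi> ` X) (\<phi> x))"
  unfolding fractional_orientation_def
proof (intro conjI ballI allI)
  fix X x assume "X \<in> E" "x \<in> X"
  then show "0 \<le> w (\<phi> ` X) (\<phi> x)"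
    using assms(1,3) unfolding fractional_orientation_def by blast
next
  fix X assume "X \<in> E"
  then have "(\<Sum>x\<in>X. w (\<phi> ` X) (\<phi> x)) = (\<Sum>y\<in>\<phi> ` X. w (\<phi> ` X) y)"
    using assms(3) by (simp add: sum.reindex)
  also have "\<dots> = 1"
    using assms(1,3) \<open>X \<in> E\<close> unfolding fractional_orientation_def by blast
  finally show "(\<Sum>x\<in>X. w (\<phi> ` X) (\<phi> x)) = 1" .
next
  fix x
  have "(\<Sum>X | X \<in> E \<and> x \<in> X. w (\<phi> ` X) (\<phi> x)) = (\<Sum>Y \<in> image \<phi> ` {X \<in> E. x \<in> X}. w Y (\<phi> x))"
    using assms(4) by (simp add: sum.reindex)
  also have "\<dots> \<le> (\<Sum>Y | Y \<in> F \<and> \<phi> x \<in> Y. w Y (\<phi> x))"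
    using assms(1-3) unfolding fractional_orientation_def by (intro sum_mono2) auto
  also have "\<dots> \<le> c"
    using assms(1) unfolding fractional_orientation_def by blast
  finally show "(\<Sum>X | X \<in> E \<and> x \<in> X. w (\<phi> ` X) (\<phi> x)) \<le> c" .
qed

lemma fractional_orientation_image:
  assumes "finite I" "inj_on E I"
    and "\<And>j v. j \<in> I \<Longrightarrow> 0 \<le> \<omega> j v"
    and "\<And>j. j \<in> I \<Longrightarrow> (\<Sum>v\<in>E j. \<omega> j v) = 1"
    and "\<And>v. (\<Sum>j\<in>I. \<omega> j v) \<le> c"
  shows "fractional_orientation (E ` I) c (\<lambda>Y. \<omega> (inv_into I E Y))"
  unfolding fractional_orientation_def
proof (intro conjI ballI allI)
  fix Y v assume "Y \<in> E ` I"
  then show "0 \<le> \<omega> (inv_into I E Y) v"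
    using assms(3) by (auto simp: inv_into_into)
next
  fix Y assume "Y \<in> E ` I"
  then show "(\<Sum>v\<in>Y. \<omega> (inv_into I E Y) v) = 1"
    using assms(2,4) by auto
next
  fix v
  have "{Y. Y \<in> E ` I \<and> v \<in> Y} = E ` {j \<in> I. v \<in> E j}"
    by auto
  moreover have "inj_on E {j \<in> I. v \<in> E j}"
    using assms(2) by (rule inj_on_subset) auto
  ultimately have "(\<Sum>Y | Y \<in> E ` I \<and> v \<in> Y. \<omega> (inv_into I E Y) v) = (\<Sum>j | j \<in> I \<and> v \<in> E j. \<omega> j v)"
    using assms(2) by (auto simp: sum.reindex intro!: sum.cong)
  also have "\<dots> \<le> (\<Sum>j\<in>I. \<omega> j v)"
    using assms(1,3) by (intro sum_mono2) auto
  also have "\<dots> \<le> c"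
    by (rule assms(5))
  finally show "(\<Sum>Y | Y \<in> E ` I \<and> v \<in> Y. \<omega> (inv_into I E Y) v) \<le> c" .
qed

section \<open>Blow-ups\<close>

definition block_vertex :: "nat \<Rightarrow> nat \<Rightarrow> nat \<Rightarrow> nat" where
  "block_vertex s t y = t * s + 1 + y"

definition block_index :: "nat \<Rightarrow> nat \<Rightarrow> nat" where
  "block_index s x = (x - 1) div s"

lemma block_index_block_vertex [simp]: "y < s \<Longrightarrow> block_index s (block_vertex s t y) = t"
  unfolding block_index_def block_vertex_def by simp

lemma block_vertex_eq_iff:
  assumes "y < s" "y' < s"
  shows "block_vertex s t y = block_vertex s t' y' \<longleftrightarrow> t = t' \<and> y = y'"
  using block_index_block_vertex[OF assms(1), of t] block_index_block_vertex[OF assms(2), of t']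
  by (auto simp: block_vertex_def)

definition blow_up_edge :: "nat \<Rightarrow> (nat set \<times> nat \<Rightarrow> nat \<Rightarrow> nat) \<Rightarrow> nat set \<Rightarrow> nat \<Rightarrow> nat set" where
  "blow_up_edge s \<pi> Y i = (\<lambda>t. block_vertex s t (\<pi> (Y, t) i)) ` Y"

definition blow_up :: "nat \<Rightarrow> nat set set \<Rightarrow> (nat set \<times> nat \<Rightarrow> nat \<Rightarrow> nat) \<Rightarrow> nat set set" where
  "blow_up s T \<pi> = {blow_up_edge s \<pi> Y i | Y i. Y \<in> T \<and> i < s}"

text \<open>Pinning the permutation at \<open>Min Y\<close> to the identity rules out relabelling the \<open>s\<close> copies
  of a template edge, so that distinct permutation families give distinct blow-ups.\<close>

definition blow_up_perms :: "nat \<Rightarrow> nat set set \<Rightarrow> (nat set \<times> nat \<Rightarrow> nat \<Rightarrow> nat) set" where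
  "blow_up_perms s T =
     PiE (SIGMA Y:T. Y) (\<lambda>(Y, t). if t = Min Y then {id} else {f. f permutes {..<s}})"

lemma card_blow_up_perms:
  assumes "finite T" "\<And>Y. Y \<in> T \<Longrightarrow> finite Y \<and> card Y = r \<and> Y \<noteq> {}"
  shows "card (blow_up_perms s T) = fact s ^ ((r - 1) * card T)"
proof -
  have "card (blow_up_perms s T) = (\<Prod>(Y, t)\<in>(SIGMA Y:T. Y). if t = Min Y then 1 else fact s)"
    unfolding blow_up_perms_def using assms
    by (subst card_PiE) (auto intro!: prod.cong simp: card_permutations)
  also have "\<dots> = (\<Prod>Y\<in>T. \<Prod>t\<in>Y. if t = Min Y then 1 else fact s)"
    using assms by (subst prod.Sigma) auto
  also have "\<dots> = (\<Prod>Y\<in>T. fact s ^ (r - 1))"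
  proof (rule prod.cong[OF refl])
    fix Y assume "Y \<in> T"
    then have "finite Y" "Min Y \<in> Y" "card Y = r"
      using assms(2) by auto
    then have "(\<Prod>t\<in>Y. if t = Min Y then 1 else fact s) = (\<Prod>t\<in>Y - {Min Y}. fact s)"
      by (subst prod.remove[of _ "Min Y"]) auto
    then show "(\<Prod>t\<in>Y. if t = Min Y then 1 else fact s) = fact s ^ (r - 1)"
      using \<open>finite Y\<close> \<open>Min Y \<in> Y\<close> \<open>card Y = r\<close> by simp
  qed
  finally show ?thesis
    by (simp add: power_mult)
qed

lemma blow_up_perms_permutes:
  "\<pi> \<in> blow_up_perms s T \<Longrightarrow> Y \<in> T \<Longrightarrow> t \<in> Y \<Longrightarrow> \<pi> (Y, t) permutes {..<s}"
  unfolding blow_up_perms_def by (drule PiE_mem[of _ _ _ "(Y, t)"]) (auto split: if_splits)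

lemma blow_up_perms_Min:
  "\<pi> \<in> blow_up_perms s T \<Longrightarrow> Y \<in> T \<Longrightarrow> Min Y \<in> Y \<Longrightarrow> \<pi> (Y, Min Y) = id"
  unfolding blow_up_perms_def by (drule PiE_mem[of _ _ _ "(Y, Min Y)"]) auto

lemma block_vertex_in_blow_up_edge_iff:
  assumes "\<forall>t\<in>Y. \<pi> (Y, t) permutes {..<s}" "i < s" "t \<in> Y" "y < s"
  shows "block_vertex s t y \<in> blow_up_edge s \<pi> Y i \<longleftrightarrow> y = \<pi> (Y, t) i"
proof -
  have "\<pi> (Y, t') i < s" if "t' \<in> Y" for t'
    using assms(1,2) that permutes_in_image by fastforce
  then show ?thesis
    using assms(3,4) unfolding blow_up_edge_def by (auto simp: block_vertex_eq_iff)
qed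

lemma bij_betw_block_index_blow_up_edge:
  assumes "\<forall>t\<in>Y. \<pi> (Y, t) permutes {..<s}" "i < s"
  shows "bij_betw (block_index s) (blow_up_edge s \<pi> Y i) Y"
proof -
  have lt: "\<pi> (Y, t) i < s" if "t \<in> Y" for t
    using assms that permutes_in_image by fastforce
  have "block_index s ` blow_up_edge s \<pi> Y i = Y"
    unfolding blow_up_edge_def image_image using lt by simp
  moreover have "inj_on (block_index s) (blow_up_edge s \<pi> Y i)"
    unfolding blow_up_edge_def using lt by (auto intro!: inj_onI)
  ultimately show ?thesis
    by (simp add: bij_betw_def)
qed

lemma blow_up_perms_lt:
  "\<pi> \<in> blow_up_perms s T \<Longrightarrow> Y \<in> T \<Longrightarrow> t \<in> Y \<Longrightarrow> i < s \<Longrightarrow> \<pi> (Y, t) i < s"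
  using blow_up_perms_permutes permutes_in_image by fastforce

lemma bij_betw_block_index_blow_up:
  assumes "\<pi> \<in> blow_up_perms s T" "X = blow_up_edge s \<pi> Y i" "Y \<in> T" "i < s"
  shows "bij_betw (block_index s) X Y"
  unfolding assms(2)
  using blow_up_perms_permutes[OF assms(1,3)] assms(4) by (intro bij_betw_block_index_blow_up_edge) auto

lemma blow_up_in_hypergraphs_on:
  assumes T: "T \<subseteq> {Y. Y \<subseteq> {..<q} \<and> card Y = r}" and n: "q * s \<le> n"
    and \<pi>: "\<pi> \<in> blow_up_perms s T"
  shows "blow_up s T \<pi> \<in> hypergraphs_on r n"
proof -
  have "X \<subseteq> {1..n} \<and> card X = r" if X: "X \<in> blow_up s T \<pi>" for X
  proof -
    obtain Y i where Yi: "X = blow_up_edge s \<pi> Y i" "Y \<in> T" "i < s"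
      using X unfolding blow_up_def by blast
    have "card X = r"
      using bij_betw_same_card[OF bij_betw_block_index_blow_up[OF \<pi> Yi]] T Yi(2) by auto
    moreover have "x \<in> {1..n}" if "x \<in> X" for x
    proof -
      obtain t where t: "t \<in> Y" "x = block_vertex s t (\<pi> (Y, t) i)"
        using \<open>x \<in> X\<close> Yi(1) unfolding blow_up_edge_def by blast
      have "Suc t * s \<le> q * s"
        using T Yi(2) t(1) by (intro mult_le_mono1) (auto simp: Suc_le_eq)
      then show ?thesis
        using t(2) n blow_up_perms_lt[OF \<pi> Yi(2) t(1) Yi(3)] unfolding block_vertex_def by simp
    qed
    ultimately show ?thesis by blast
  qed
  then show ?thesis
    unfolding hypergraphs_on_def by blast
qed

lemma inj_on_image_block_index_blow_up:
  assumes \<pi>: "\<pi> \<in> blow_up_perms s T"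
  shows "inj_on (image (block_index s)) {X \<in> blow_up s T \<pi>. x \<in> X}"
proof (rule inj_onI)
  fix X X' assume X: "X \<in> {X \<in> blow_up s T \<pi>. x \<in> X}" and X': "X' \<in> {X \<in> blow_up s T \<pi>. x \<in> X}"
    and eq: "block_index s ` X = block_index s ` X'"
  obtain Y i where Yi: "X = blow_up_edge s \<pi> Y i" "Y \<in> T" "i < s"
    using X unfolding blow_up_def by blast
  obtain Y' i' where Yi': "X' = blow_up_edge s \<pi> Y' i'" "Y' \<in> T" "i' < s"
    using X' unfolding blow_up_def by blast
  have "Y' = Y"
    using eq bij_betw_block_index_blow_up[OF \<pi> Yi] bij_betw_block_index_blow_up[OF \<pi> Yi']
    by (simp add: bij_betw_def)
  obtain t where t: "t \<in> Y" "x = block_vertex s t (\<pi> (Y, t) i)"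
    using X Yi(1) unfolding blow_up_edge_def by blast
  have perm: "\<forall>t\<in>Y. \<pi> (Y, t) permutes {..<s}"
    using blow_up_perms_permutes[OF \<pi> Yi(2)] by blast
  have "\<pi> (Y, t) i = \<pi> (Y, t) i'"
    using X' t Yi' \<open>Y' = Y\<close> blow_up_perms_lt[OF \<pi> Yi(2) t(1) Yi(3)]
      block_vertex_in_blow_up_edge_iff[OF perm Yi'(3) t(1)] by simp
  then have "i = i'"
    using perm t(1) permutes_inj by (metis inj_eq)
  then show "X = X'"
    using Yi Yi' \<open>Y' = Y\<close> by simp
qed

lemma blow_up_in_Q_class:
  assumes T: "T \<subseteq> {Y. Y \<subseteq> {..<q} \<and> card Y = r}" and w: "fractional_orientation T c w"
    and n: "q * s \<le> n" and \<pi>: "\<pi> \<in> blow_up_perms s T"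
  shows "blow_up s T \<pi> \<in> Q_class r c n"
proof -
  have finT: "finite T"
    using T by (rule finite_subset) (auto intro: finite_subset[of _ "Pow {..<q}"])
  have "fractional_orientation (blow_up s T \<pi>) c (\<lambda>X x. w (block_index s ` X) (block_index s x))"
  proof (rule fractional_orientation_pullback[OF w finT])
    show "block_index s ` X \<in> T \<and> inj_on (block_index s) X" if "X \<in> blow_up s T \<pi>" for X
      using that bij_betw_block_index_blow_up[OF \<pi>] unfolding blow_up_def by (auto simp: bij_betw_def)
  qed (rule inj_on_image_block_index_blow_up[OF \<pi>])
  moreover have "finite (blow_up s T \<pi>)"
    unfolding blow_up_def using finT by (simp add: finite_image_set2)
  ultimately have "real (card (induced_edges (blow_up s T \<pi>) U)) \<le> c * real (card U)"
    if "U \<subseteq> {1..n}" for U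
    using that by (intro card_induced_edges_le_if_fractional_orientation) (auto intro: finite_subset)
  then show ?thesis
    using blow_up_in_hypergraphs_on[OF T n \<pi>] unfolding Q_class_def by auto
qed

lemma inj_on_blow_up:
  assumes "\<And>Y. Y \<in> T \<Longrightarrow> finite Y \<and> Y \<noteq> {}"
  shows "inj_on (blow_up s T) (blow_up_perms s T)"
proof (rule inj_onI)
  fix \<pi> \<pi>' assume \<pi>: "\<pi> \<in> blow_up_perms s T" and \<pi>': "\<pi>' \<in> blow_up_perms s T"
    and eq: "blow_up s T \<pi> = blow_up s T \<pi>'"
  show "\<pi> = \<pi>'"
  proof (rule PiE_ext[OF \<pi>[unfolded blow_up_perms_def] \<pi>'[unfolded blow_up_perms_def]])
    fix Yt assume "Yt \<in> (SIGMA Y:T. Y)"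
    then obtain Y t where Yt: "Yt = (Y, t)" "Y \<in> T" "t \<in> Y" by blast
    have Min: "Min Y \<in> Y" "\<pi> (Y, Min Y) = id" "\<pi>' (Y, Min Y) = id"
      using assms[OF Yt(2)] blow_up_perms_Min[OF \<pi> Yt(2)] blow_up_perms_Min[OF \<pi>' Yt(2)] by auto
    have perm: "\<forall>t\<in>Y. \<pi> (Y, t) permutes {..<s}" "\<forall>t\<in>Y. \<pi>' (Y, t) permutes {..<s}"
      using blow_up_perms_permutes[OF \<pi> Yt(2)] blow_up_perms_permutes[OF \<pi>' Yt(2)] by blast+
    have "\<pi> (Y, t) i = \<pi>' (Y, t) i" if "i < s" for i
    proof -
      have "blow_up_edge s \<pi> Y i \<in> blow_up s T \<pi>'"
        using eq Yt(2) \<open>i < s\<close> unfolding blow_up_def by blast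
      then obtain Y' i' where Yi': "blow_up_edge s \<pi> Y i = blow_up_edge s \<pi>' Y' i'" "Y' \<in> T" "i' < s"
        unfolding blow_up_def by blast
      have "Y' = Y"
        using bij_betw_block_index_blow_up[OF \<pi> refl Yt(2) \<open>i < s\<close>]
          bij_betw_block_index_blow_up[OF \<pi>' refl Yi'(2,3)] Yi'(1) by (simp add: bij_betw_def)
      have "i' = i"
        using block_vertex_in_blow_up_edge_iff[OF perm(1) \<open>i < s\<close> Min(1) \<open>i < s\<close>]
          block_vertex_in_blow_up_edge_iff[OF perm(2) Yi'(3) Min(1) \<open>i < s\<close>] Yi'(1) \<open>Y' = Y\<close> Min
        by simp
      then show ?thesis
        using block_vertex_in_blow_up_edge_iff[OF perm(1) \<open>i < s\<close> Yt(3), of "\<pi> (Y, t) i"]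
          block_vertex_in_blow_up_edge_iff[OF perm(2) \<open>i < s\<close> Yt(3), of "\<pi> (Y, t) i"]
          blow_up_perms_lt[OF \<pi> Yt(2,3) \<open>i < s\<close>] Yi'(1) \<open>Y' = Y\<close> by simp
    qed
    moreover have "\<pi> (Y, t) i = \<pi>' (Y, t) i" if "\<not> i < s" for i
      using perm Yt(3) that permutes_not_in by (metis lessThan_iff)
    ultimately show "\<pi> Yt = \<pi>' Yt"
      unfolding Yt(1) by (meson ext)
  qed
qed

lemma card_Q_class_ge_blow_up:
  assumes T: "T \<subseteq> {Y. Y \<subseteq> {..<q} \<and> card Y = r}" and r: "r \<ge> 1"
    and w: "fractional_orientation T c w" and n: "q * s \<le> n"
  shows "fact s ^ ((r - 1) * card T) \<le> card (Q_class r c n)"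
proof -
  have finT: "finite T"
    using T by (rule finite_subset) (auto intro: finite_subset[of _ "Pow {..<q}"])
  have Y: "finite Y \<and> card Y = r \<and> Y \<noteq> {}" if "Y \<in> T" for Y
    using T that r by (auto intro: finite_subset)
  have "finite (Q_class r c n)"
    by (rule finite_subset[of _ "Pow (Pow {1..n})"]) (auto simp: Q_class_def hypergraphs_on_def)
  moreover have "blow_up s T ` blow_up_perms s T \<subseteq> Q_class r c n"
    using blow_up_in_Q_class[OF T w n] by blast
  ultimately have "card (blow_up s T ` blow_up_perms s T) \<le> card (Q_class r c n)"
    by (rule card_mono)
  then show ?thesis
    using card_image[OF inj_on_blow_up] card_blow_up_perms[OF finT] Y by simp
qed

section \<open>The interval template\<close>

definition cell_clamp :: "nat \<Rightarrow> real \<Rightarrow> real" where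
  "cell_clamp v t = min (real v + 1) (max (real v) t)"

text \<open>For \<open>a \<le> b\<close>, the length of \<open>[a, b] \<inter> [v, v + 1]\<close>.\<close>

definition cell_overlap :: "real \<Rightarrow> real \<Rightarrow> nat \<Rightarrow> real" where
  "cell_overlap a b v = cell_clamp v b - cell_clamp v a"

lemma sum_cell_clamp: "(\<Sum>v<N. cell_clamp v t - real v) = min (real N) (max 0 t)"
  by (induction N) (auto simp: cell_clamp_def min_def max_def)

lemma cell_overlap_nonneg: "a \<le> b \<Longrightarrow> 0 \<le> cell_overlap a b v"
  by (auto simp: cell_overlap_def cell_clamp_def min_def max_def)

lemma cell_overlap_pos_D: "0 < cell_overlap a b v \<Longrightarrow> real v < b \<and> a < real v + 1"
  by (auto simp: cell_overlap_def cell_clamp_def min_def max_def split: if_splits)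

lemma sum_cell_overlap:
  assumes "0 \<le> a" "a \<le> b" "b \<le> real N"
  shows "(\<Sum>v<N. cell_overlap a b v) = b - a"
proof -
  have "(\<Sum>v<N. cell_overlap a b v) = (\<Sum>v<N. cell_clamp v b - real v) - (\<Sum>v<N. cell_clamp v a - real v)"
    unfolding cell_overlap_def by (simp add: sum_subtractf[symmetric])
  then show ?thesis
    using assms by (simp add: sum_cell_clamp)
qed

lemma sum_cell_overlap_consecutive_le: "(\<Sum>j<p. cell_overlap (g j) (g (Suc j)) v) \<le> 1"
proof -
  have "(\<Sum>j<p. cell_overlap (g j) (g (Suc j)) v) = cell_clamp v (g p) - cell_clamp v (g 0)"
    unfolding cell_overlap_def by (rule sum_lessThan_telescope)
  also have "\<dots> \<le> 1"
    by (auto simp: cell_clamp_def)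
  finally show ?thesis .
qed

definition template_start :: "real \<Rightarrow> nat \<Rightarrow> nat" where
  "template_start c j = nat \<lfloor>real j / c\<rfloor>"

definition template_weight :: "real \<Rightarrow> nat \<Rightarrow> nat \<Rightarrow> real" where
  "template_weight c j v = c * cell_overlap (real j / c) (real (Suc j) / c) v"

text \<open>Edge \<open>j\<close> consists of the \<open>r - 1\<close> cells from the start of \<open>[j/c, (j+1)/c]\<close> on, plus the
  next cell if the interval reaches it; otherwise a spare vertex among \<open>M + r, \<dots>, M + r + K - 1\<close>,
  chosen by \<open>j mod K\<close> so that edges with the same start stay distinct.\<close>

definition template_last :: "real \<Rightarrow> nat \<Rightarrow> nat \<Rightarrow> nat \<Rightarrow> nat \<Rightarrow> nat" where
  "template_last c r M K j =
     (if 0 < template_weight c j (template_start c j + r - 1) then template_start c j + r - 1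
      else M + r + j mod K)"

definition template_edge :: "real \<Rightarrow> nat \<Rightarrow> nat \<Rightarrow> nat \<Rightarrow> nat \<Rightarrow> nat set" where
  "template_edge c r M K j = {template_start c j ..< template_start c j + r - 1} \<union> {template_last c r M K j}"

locale interval_template =
  fixes c :: real and r M K :: nat
  assumes c_pos: "c > 0" and step_le: "1 / c \<le> real r - 1" and r_ge: "r \<ge> 2" and K_gt: "c < real K"
begin

lemma template_start_le: "real (template_start c j) \<le> real j / c"
  using c_pos unfolding template_start_def by (simp add: of_nat_nat)

lemma template_start_gt: "real j / c < real (template_start c j) + 1"
  using c_pos unfolding template_start_def by (simp add: of_nat_nat)

lemma template_start_mono: "j \<le> j' \<Longrightarrow> template_start c j \<le> template_start c j'"
  using c_pos unfolding template_start_def by (intro nat_mono floor_mono divide_right_mono) auto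

lemma template_start_lt:
  assumes "real (Suc j) \<le> c * real M"
  shows "template_start c j < M"
proof -
  have "real j / c < real (Suc j) / c"
    using c_pos by (intro divide_strict_right_mono) auto
  also have "\<dots> \<le> real M"
    using assms c_pos by (simp add: divide_le_eq mult.commute)
  finally show ?thesis
    using template_start_le[of j] by linarith
qed

lemma template_weight_nonneg: "0 \<le> template_weight c j v"
  using c_pos unfolding template_weight_def
  by (intro mult_nonneg_nonneg cell_overlap_nonneg divide_right_mono) auto

lemma template_weight_pos_D:
  assumes "0 < template_weight c j v"
  shows "template_start c j \<le> v" "v < template_start c j + r"
proof -
  have v: "real v < real (Suc j) / c" "real j / c < real v + 1"
    using assms c_pos cell_overlap_pos_D unfolding template_weight_def by (auto simp: zero_less_mult_iff)
  then show "template_start c j \<le> v"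
    using template_start_le[of j] by linarith
  have "real (Suc j) / c = real j / c + 1 / c"
    by (simp add: add_divide_distrib)
  then show "v < template_start c j + r"
    using v template_start_gt[of j] step_le by linarith
qed

lemma card_template_edge:
  assumes "real (Suc j) \<le> c * real M"
  shows "card (template_edge c r M K j) = r"
proof -
  have "template_last c r M K j \<notin> {template_start c j ..< template_start c j + r - 1}"
    using template_start_lt[OF assms] unfolding template_last_def by auto
  then show ?thesis
    using r_ge unfolding template_edge_def by simp
qed

lemma template_edge_subset:
  assumes "real (Suc j) \<le> c * real M"
  shows "template_edge c r M K j \<subseteq> {..<M + r + K}"
  using template_start_lt[OF assms] K_gt c_pos unfolding template_edge_def template_last_def by auto

lemma sum_template_weight:
  assumes "real (Suc j) \<le> c * real M"
  shows "(\<Sum>v\<in>template_edge c r M K j. template_weight c j v) = 1"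
proof -
  let ?N = "M + r + K"
  have "(\<Sum>v\<in>template_edge c r M K j. template_weight c j v) = (\<Sum>v<?N. template_weight c j v)"
  proof (rule sum.mono_neutral_left)
    show "\<forall>v\<in>{..<?N} - template_edge c r M K j. template_weight c j v = 0"
    proof
      fix v assume v: "v \<in> {..<?N} - template_edge c r M K j"
      show "template_weight c j v = 0"
      proof (rule ccontr)
        assume "template_weight c j v \<noteq> 0"
        then have pos: "0 < template_weight c j v"
          using template_weight_nonneg[of j v] by linarith
        then have "v = template_start c j + r - 1"
          using template_weight_pos_D[OF pos] v unfolding template_edge_def by auto
        then show False
          using pos v unfolding template_edge_def template_last_def by auto
      qed
    qed
  qed (use template_edge_subset[OF assms] in auto)
  also have "\<dots> = c * (real (Suc j) / c - real j / c)"
  proof -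
    have "real (Suc j) / c \<le> real M"
      using assms c_pos by (simp add: divide_le_eq mult.commute)
    then have "real (Suc j) / c \<le> real ?N"
      by linarith
    then show ?thesis
      using c_pos unfolding template_weight_def
      by (simp add: sum_distrib_left[symmetric] sum_cell_overlap divide_right_mono)
  qed
  also have "\<dots> = 1"
    using c_pos by (simp add: field_simps)
  finally show ?thesis .
qed

end

context interval_template
begin

lemma sum_template_weight_le: "(\<Sum>j<p. template_weight c j v) \<le> c"
  using sum_cell_overlap_consecutive_le[where g = "\<lambda>j. real j / c"] c_pos
  unfolding template_weight_def by (simp add: sum_distrib_left[symmetric])

lemma template_start_eq_imp_close:
  assumes "j \<le> j'" "template_start c j = template_start c j'"
  shows "j' - j < K"
proof -
  have "real j' / c - real j / c < 1"
    using template_start_le[of j] template_start_gt[of j'] assms(2) by linarith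
  then have "real j' - real j < c"
    using c_pos by (simp add: diff_divide_distrib[symmetric] divide_less_eq)
  then show ?thesis
    using K_gt assms(1) by linarith
qed

lemma template_last_eq_spare:
  assumes "j < j'" "template_start c j = template_start c j'"
  shows "template_last c r M K j = M + r + j mod K"
proof -
  define a where "a = template_start c j'"
  have "real (Suc j) / c \<le> real j' / c"
    using assms(1) c_pos by (intro divide_right_mono) auto
  then have "real (Suc j) / c \<le> real (a + r - 1)"
    using template_start_gt[of j'] r_ge unfolding a_def by simp
  then have "\<not> 0 < cell_overlap (real j / c) (real (Suc j) / c) (a + r - 1)"
    using cell_overlap_pos_D by fastforce
  moreover have "0 \<le> cell_overlap (real j / c) (real (Suc j) / c) (a + r - 1)"
    using c_pos by (intro cell_overlap_nonneg divide_right_mono) auto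
  ultimately have "template_weight c j (a + r - 1) = 0"
    unfolding template_weight_def by simp
  then show ?thesis
    using assms(2) unfolding template_last_def a_def by simp
qed

lemma template_edge_neq:
  assumes jj: "j < j'" and j'M: "real (Suc j') \<le> c * real M"
  shows "template_edge c r M K j \<noteq> template_edge c r M K j'"
proof
  assume eq: "template_edge c r M K j = template_edge c r M K j'"
  have "template_start c j' \<le> x" if "x \<in> template_edge c r M K j'" for x
    using that template_start_lt[OF j'M] r_ge unfolding template_edge_def template_last_def by auto
  moreover have "template_start c j \<in> template_edge c r M K j"
    using r_ge unfolding template_edge_def by auto
  ultimately have start: "template_start c j = template_start c j'"
    using eq template_start_mono[of j j'] jj by fastforce
  have "M + r + j mod K \<in> template_edge c r M K j'"
    using eq template_last_eq_spare[OF jj start] unfolding template_edge_def by auto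
  then have "j mod K = j' mod K"
    using template_start_lt[OF j'M] unfolding template_edge_def template_last_def
    by (auto split: if_splits)
  then show False
    using template_start_eq_imp_close[OF less_imp_le[OF jj] start] jj
    by (metis less_imp_le_nat mod_eq_dvd_iff_nat nat_dvd_not_less zero_less_diff)
qed

lemma inj_on_template_edge:
  assumes "real p \<le> c * real M"
  shows "inj_on (template_edge c r M K) {..<p}"
proof (rule inj_onI)
  fix j j' assume "j \<in> {..<p}" "j' \<in> {..<p}" "template_edge c r M K j = template_edge c r M K j'"
  then show "j = j'"
    using template_edge_neq[of j j'] template_edge_neq[of j' j] assms
    by (metis lessThan_iff linorder_neqE_nat of_nat_le_iff order.trans Suc_leI)
qed

end

lemma exists_interval_template:
  assumes "r \<ge> 2" "c > 0" "1 / c \<le> real r - 1"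
  shows "\<exists>T w. T \<subseteq> {Y. Y \<subseteq> {..<M + r + (nat \<lceil>c\<rceil> + 1)} \<and> card Y = r} \<and>
    card T = nat \<lfloor>c * real M\<rfloor> \<and> fractional_orientation T c w"
proof -
  define K where "K = nat \<lceil>c\<rceil> + 1"
  define p where "p = nat \<lfloor>c * real M\<rfloor>"
  define E where "E = template_edge c r M K"
  interpret interval_template c r M K
    using assms unfolding K_def by unfold_locales linarith+
  have p: "real p \<le> c * real M"
    unfolding p_def using assms(2) by (simp add: of_nat_nat)
  have jM: "real (Suc j) \<le> c * real M" if "j < p" for j
    using that p by (metis Suc_leI of_nat_le_iff order.trans)
  have inj: "inj_on E {..<p}"
    unfolding E_def by (rule inj_on_template_edge[OF p])
  have "fractional_orientation (E ` {..<p}) c (\<lambda>Y. template_weight c (inv_into {..<p} E Y))"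
    using inj sum_template_weight[OF jM] sum_template_weight_le
    unfolding E_def by (intro fractional_orientation_image) (auto simp: template_weight_nonneg)
  moreover have "E ` {..<p} \<subseteq> {Y. Y \<subseteq> {..<M + r + K} \<and> card Y = r}"
    using template_edge_subset[OF jM] card_template_edge[OF jM] unfolding E_def by auto
  moreover have "card (E ` {..<p}) = p"
    using card_image[OF inj] by simp
  ultimately show ?thesis
    unfolding K_def p_def by blast
qed

section \<open>Asymptotics\<close>

lemma card_Q_class_ge_fact_power:
  assumes "r \<ge> 2" "c > 0" "1 / c \<le> real r - 1" "(M + r + (nat \<lceil>c\<rceil> + 1)) * s \<le> n"
  shows "fact s ^ ((r - 1) * nat \<lfloor>c * real M\<rfloor>) \<le> card (Q_class r c n)"
proof -
  obtain T w where T: "T \<subseteq> {Y. Y \<subseteq> {..<M + r + (nat \<lceil>c\<rceil> + 1)} \<and> card Y = r}"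
    and "card T = nat \<lfloor>c * real M\<rfloor>" and w: "fractional_orientation T c w"
    using exists_interval_template[OF assms(1-3)] by blast
  moreover have "r \<ge> 1"
    using assms(1) by simp
  ultimately show ?thesis
    using card_Q_class_ge_blow_up[OF T _ w assms(4)] by simp
qed

lemma Q_class_subset_S_class: "Q_class r c n \<subseteq> S_class r c n"
proof
  fix E assume E: "E \<in> Q_class r c n"
  then have "induced_edges E {1..n} = E"
    unfolding Q_class_def hypergraphs_on_def induced_edges_def by auto
  with E show "E \<in> S_class r c n"
    unfolding Q_class_def S_class_def by force
qed

lemma finite_S_class: "finite (S_class r c n)"
  by (rule finite_subset[of _ "Pow (Pow {1..n})"]) (auto simp: S_class_def hypergraphs_on_def)

lemma card_Q_class_pos: "c \<ge> 0 \<Longrightarrow> card (Q_class r c n) > 0"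
proof -
  assume "c \<ge> 0"
  then have "{} \<in> Q_class r c n"
    unfolding Q_class_def hypergraphs_on_def induced_edges_def by auto
  then show ?thesis
    using finite_subset[OF Q_class_subset_S_class finite_S_class] card_gt_0_iff by blast
qed

lemma card_Q_class_le_S_class: "card (Q_class r c n) \<le> card (S_class r c n)"
  by (rule card_mono[OF finite_S_class Q_class_subset_S_class])

lemma ln_card_Q_class_le_S_class:
  "c \<ge> 0 \<Longrightarrow> ln (real (card (Q_class r c n))) \<le> ln (real (card (S_class r c n)))"
  using card_Q_class_pos[of c r n] card_Q_class_le_S_class[of r c n] by simp

lemma eventually_ln_ge: "\<forall>\<^sub>F n in sequentially. K \<le> ln (real n)"
  using filterlim_compose[OF ln_at_top filterlim_real_sequentially] by (simp add: filterlim_at_top)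

lemma eventually_real_ge: "\<forall>\<^sub>F n in sequentially. K \<le> real n"
  using filterlim_real_sequentially by (simp add: filterlim_at_top)

lemma eventually_ln_card_S_class_le:
  assumes "r \<ge> 2" "c \<ge> 0" "\<epsilon> > 0"
  shows "\<forall>\<^sub>F n in sequentially.
    ln (real (card (S_class r c n))) \<le> (c + \<epsilon>) * ((real r - 1) * real n * ln (real n))"
  using eventually_real_ge[of 2] eventually_ln_ge[of "1 / (\<epsilon> * (real r - 1))"]
proof eventually_elim
  case (elim n)
  define m where "m = nat \<lfloor>c * real n\<rfloor>"
  have r1: "real r - 1 > 0"
    using assms(1) by simp
  have "real (card (S_class r c n)) > 0"
    using card_Q_class_pos[of c r n] card_Q_class_le_S_class[of r c n] assms(2) by linarith
  moreover have "real (card (S_class r c n)) \<le> real n ^ ((r - 1) * m) * exp (real n)"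
    using card_S_class_le[of r n c] assms(1) elim(1) unfolding m_def by simp
  ultimately have "ln (real (card (S_class r c n))) \<le> ln (real n ^ ((r - 1) * m) * exp (real n))"
    by simp
  also have "\<dots> = (real r - 1) * real m * ln (real n) + real n"
    using elim(1) assms(1) by (simp add: ln_mult ln_realpow of_nat_diff)
  also have "\<dots> \<le> (real r - 1) * (c * real n) * ln (real n) + real n"
    using r1 elim(1) assms(2) unfolding m_def
    by (intro add_right_mono mult_right_mono mult_left_mono) (auto simp: of_nat_nat)
  finally have S: "ln (real (card (S_class r c n))) \<le> (real r - 1) * (c * real n) * ln (real n) + real n" .
  have "real n \<le> \<epsilon> * ((real r - 1) * real n * ln (real n))"
  proof -
    have "1 \<le> \<epsilon> * (real r - 1) * ln (real n)"
      using elim(2) r1 assms(3) by (simp add: divide_le_eq mult.commute)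
    then have "real n * 1 \<le> real n * (\<epsilon> * (real r - 1) * ln (real n))"
      by (intro mult_left_mono) auto
    then show ?thesis
      by (simp add: algebra_simps)
  qed
  moreover have "(c + \<epsilon>) * ((real r - 1) * real n * ln (real n)) =
      (real r - 1) * (c * real n) * ln (real n) + \<epsilon> * ((real r - 1) * real n * ln (real n))"
    by (simp add: algebra_simps)
  ultimately show ?case
    using S by linarith
qed

lemma mult_ln_minus_mono:
  fixes x y :: real
  assumes "exp 1 \<le> x" "x \<le> y"
  shows "x * ln x - x \<le> y * ln y - y"
proof -
  have "0 < x"
    using assms(1) exp_gt_zero[of 1] by linarith
  then have "1 \<le> ln x"
    using assms(1) by (metis ln_exp ln_le_cancel_iff exp_gt_zero)
  moreover have "ln x \<le> ln y"
    using \<open>0 < x\<close> assms(2) by simp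
  ultimately have "x * (ln x - 1) \<le> y * (ln y - 1)"
    using \<open>0 < x\<close> assms(2) by (intro mult_mono) auto
  then show ?thesis
    by (simp add: algebra_simps)
qed

lemma exists_floor_mult_ge:
  fixes c \<delta> :: real
  assumes "c \<ge> 0" "\<delta> > 0"
  shows "\<exists>M. (c - \<delta> / 2) * real (M + k) \<le> real (nat \<lfloor>c * real M\<rfloor>)"
proof
  define M where "M = nat \<lceil>2 * (1 + c * real k) / \<delta>\<rceil>"
  have "2 * (1 + c * real k) / \<delta> \<le> real M"
    unfolding M_def by linarith
  then have M: "1 + c * real k \<le> \<delta> / 2 * real M"
    using assms(2) by (simp add: field_simps)
  have "(c - \<delta> / 2) * real (M + k) \<le> c * real M - \<delta> / 2 * real M + c * real k"
    using assms by (simp add: algebra_simps)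
  also have "\<dots> \<le> c * real M - 1"
    using M by linarith
  also have "\<dots> \<le> real (nat \<lfloor>c * real M\<rfloor>)"
    using assms(1) by (simp add: of_nat_nat)
  finally show "(c - \<delta> / 2) * real (M + k) \<le> real (nat \<lfloor>c * real M\<rfloor>)" .
qed

lemma eventually_mult_ln_le_shifted:
  fixes a b q :: real
  assumes "q \<ge> 1" "0 \<le> b" "b < a"
  shows "\<forall>\<^sub>F n in sequentially.
    b * (real n * ln (real n)) \<le> a * q * ((real n / q - 1) * ln (real n / q - 1) - (real n / q - 1))"
proof -
  define D where "D = ln (2 * q) + 1"
  have "D \<ge> 0"
    using assms(1) unfolding D_def by simp
  show ?thesis
    using eventually_real_ge[of "max (4 * q) (2 * a * q / (a - b))"]
      eventually_ln_ge[of "max D (2 * a * D / (a - b))"]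
  proof eventually_elim
    case (elim n)
    define L where "L = ln (real n)"
    define x where "x = real n / q - 1"
    have n: "4 * q \<le> real n" "a * q \<le> (a - b) / 2 * real n" and L: "D \<le> L" "a * D \<le> (a - b) / 2 * L"
      using elim assms unfolding L_def by (auto simp: field_simps)
    have qx: "q * x = real n - q"
      unfolding x_def using assms(1) by (simp add: field_simps)
    have "real n / (2 * q) \<le> x"
      unfolding x_def using n(1) assms(1) by (simp add: field_simps)
    moreover have "0 < real n / (2 * q)"
      using n(1) assms(1) by simp
    ultimately have "ln (real n / (2 * q)) \<le> ln x"
      by simp
    then have lnx: "L - D \<le> ln x - 1"
      using n(1) assms(1) unfolding L_def D_def by (simp add: ln_div)
    have "b * (real n * L) \<le> a * (real n * L) - a * (real n * D) - a * (q * L)"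
    proof -
      have "real n * (a * D) \<le> real n * ((a - b) / 2 * L)"
        using L(2) by (intro mult_left_mono) auto
      moreover have "a * q * L \<le> (a - b) / 2 * real n * L"
        using n(2) L(1) \<open>D \<ge> 0\<close> by (intro mult_right_mono) auto
      ultimately show ?thesis
        by (simp add: algebra_simps)
    qed
    also have "\<dots> \<le> a * ((real n - q) * (L - D))"
      using assms \<open>D \<ge> 0\<close> by (simp add: algebra_simps)
    also have "\<dots> \<le> a * ((real n - q) * (ln x - 1))"
      using assms n(1) lnx by (intro mult_left_mono) auto
    also have "\<dots> = a * q * (x * ln x - x)"
      unfolding qx[symmetric] by (simp add: algebra_simps)
    finally show ?case
      unfolding L_def x_def .
  qed
qed

lemma ln_card_Q_class_ge:
  assumes r: "r \<ge> 2" and c: "c > 0" "1 / c \<le> real r - 1"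
    and n: "(M + r + (nat \<lceil>c\<rceil> + 1)) * s \<le> n"
  shows "(real r - 1) * real (nat \<lfloor>c * real M\<rfloor>) * (real s * ln (real s) - real s)
    \<le> ln (real (card (Q_class r c n)))"
proof -
  define p where "p = nat \<lfloor>c * real M\<rfloor>"
  have "fact s ^ ((r - 1) * p) \<le> card (Q_class r c n)"
    unfolding p_def by (rule card_Q_class_ge_fact_power[OF r c n])
  then have "(fact s :: real) ^ ((r - 1) * p) \<le> real (card (Q_class r c n))"
    by (metis of_nat_fact of_nat_le_iff of_nat_power)
  then have "ln ((fact s :: real) ^ ((r - 1) * p)) \<le> ln (real (card (Q_class r c n)))"
    by (rule ln_mono) simp
  then have "(real r - 1) * real p * ln (fact s) \<le> ln (real (card (Q_class r c n)))"
    using r by (simp add: ln_realpow of_nat_diff)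
  moreover have "(real r - 1) * real p * (real s * ln (real s) - real s) \<le> (real r - 1) * real p * ln (fact s)"
    using r ln_fact_ge[of s] by (intro mult_left_mono) auto
  ultimately show ?thesis
    unfolding p_def by linarith
qed

lemma divide_minus_one_le_div: "0 < q \<Longrightarrow> real n / real q - 1 \<le> real (n div q)"
proof -
  assume "0 < q"
  then have "n < q + q * (n div q)"
    by (rule dividend_less_times_div)
  then have "real n < real q * (real (n div q) + 1)"
    by (simp add: algebra_simps flip: of_nat_mult of_nat_add)
  with \<open>0 < q\<close> show ?thesis
    by (simp add: field_simps)
qed

lemma eventually_ln_card_Q_class_ge:
  assumes r: "r \<ge> 2" and c: "c > 0" "1 / c \<le> real r - 1" and \<epsilon>: "\<epsilon> > 0"
  shows "\<forall>\<^sub>F n in sequentially.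
    (c - \<epsilon>) * ((real r - 1) * real n * ln (real n)) \<le> ln (real (card (Q_class r c n)))"
proof -
  define \<delta> where "\<delta> = min \<epsilon> (c / 2)"
  have \<delta>: "0 < \<delta>" "\<delta> \<le> \<epsilon>" "\<delta> < c"
    using c \<epsilon> unfolding \<delta>_def by auto
  define q where "q M = M + r + (nat \<lceil>c\<rceil> + 1)" for M
  obtain M where M: "(c - \<delta> / 2) * real (q M) \<le> real (nat \<lfloor>c * real M\<rfloor>)"
    using exists_floor_mult_ge[of c \<delta> "r + (nat \<lceil>c\<rceil> + 1)"] c \<delta> unfolding q_def by (auto simp: add.assoc)
  have q: "real (q M) \<ge> 1"
    unfolding q_def by simp
  have ab: "0 \<le> c - \<delta>" "c - \<delta> < c - \<delta> / 2"
    using \<delta> by auto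
  show ?thesis
    using eventually_mult_ln_le_shifted[OF q ab] eventually_real_ge[of "4 * real (q M)"]
  proof eventually_elim
    case (elim n)
    define s where "s = n div q M"
    define x where "x = real n / real (q M) - 1"
    have "3 \<le> x"
      unfolding x_def using elim(2) q by (simp add: field_simps)
    then have "exp 1 \<le> x"
      using exp_le by linarith
    moreover have "x \<le> real s"
      unfolding x_def s_def using q by (intro divide_minus_one_le_div) simp
    ultimately have sx: "x * ln x - x \<le> real s * ln (real s) - real s" "0 \<le> x * ln x - x"
      using mult_ln_minus_mono[of x] mult_ln_minus_mono[of "exp 1" x] by auto
    have "(c - \<epsilon>) * ((real r - 1) * real n * ln (real n))
        \<le> (c - \<delta>) * ((real r - 1) * real n * ln (real n))"
      using \<delta> r elim(2) q by (intro mult_right_mono) auto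
    also have "\<dots> = (real r - 1) * ((c - \<delta>) * (real n * ln (real n)))"
      by (simp add: ac_simps)
    also have "\<dots> \<le> (real r - 1) * ((c - \<delta> / 2) * real (q M) * (x * ln x - x))"
      using elim(1) r unfolding x_def by (intro mult_left_mono) auto
    also have "\<dots> = (real r - 1) * ((c - \<delta> / 2) * real (q M)) * (x * ln x - x)"
      by (simp add: ac_simps)
    also have "\<dots> \<le> (real r - 1) * real (nat \<lfloor>c * real M\<rfloor>) * (real s * ln (real s) - real s)"
      using M sx r by (intro mult_left_mono mult_mono) auto
    also have "\<dots> \<le> ln (real (card (Q_class r c n)))"
      using ln_card_Q_class_ge[OF r c, of M s n] times_div_less_eq_dividend[of "q M" n]
      unfolding s_def q_def by (simp add: mult.commute)
    finally show ?case .
  qed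
qed

lemma tendsto_divide_if_eventually_bounds:
  fixes Y Z :: "nat \<Rightarrow> real" and c :: real
  assumes Z: "\<forall>\<^sub>F n in sequentially. Z n > 0"
    and upper: "\<And>\<epsilon>. \<epsilon> > 0 \<Longrightarrow> \<forall>\<^sub>F n in sequentially. Y n \<le> (c + \<epsilon>) * Z n"
    and lower: "\<And>\<epsilon>. \<epsilon> > 0 \<Longrightarrow> \<forall>\<^sub>F n in sequentially. (c - \<epsilon>) * Z n \<le> Y n"
  shows "(\<lambda>n. Y n / Z n) \<longlonglongrightarrow> c"
proof (rule order_tendstoI)
  fix e assume "e < c"
  then have "(c - e) / 2 > 0"
    by simp
  from lower[OF this] Z show "\<forall>\<^sub>F n in sequentially. e < Y n / Z n"
  proof eventually_elim
    case (elim n)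
    then have "c - (c - e) / 2 \<le> Y n / Z n"
      by (simp add: pos_le_divide_eq)
    moreover have "e < c - (c - e) / 2"
      using \<open>e < c\<close> by (simp add: field_simps)
    ultimately show ?case
      by linarith
  qed
next
  fix e assume "c < e"
  then have "(e - c) / 2 > 0"
    by simp
  from upper[OF this] Z show "\<forall>\<^sub>F n in sequentially. Y n / Z n < e"
  proof eventually_elim
    case (elim n)
    then have "Y n / Z n \<le> c + (e - c) / 2"
      by (simp add: pos_divide_le_eq)
    moreover have "c + (e - c) / 2 < e"
      using \<open>c < e\<close> by (simp add: field_simps)
    ultimately show ?case
      by linarith
  qed
qed

lemma exists_vanishing_powr_exponent:
  fixes X :: "nat \<Rightarrow> real" and a c :: real
  assumes a: "a > 0" and X: "\<forall>\<^sub>F n in sequentially. X n > 0"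
    and upper: "\<And>\<epsilon>. \<epsilon> > 0 \<Longrightarrow> \<forall>\<^sub>F n in sequentially. ln (X n) \<le> (c + \<epsilon>) * (a * real n * ln (real n))"
    and lower: "\<And>\<epsilon>. \<epsilon> > 0 \<Longrightarrow> \<forall>\<^sub>F n in sequentially. (c - \<epsilon>) * (a * real n * ln (real n)) \<le> ln (X n)"
  shows "\<exists>f. f \<longlonglongrightarrow> 0 \<and> (\<forall>\<^sub>F n in sequentially. X n = real n powr (a * (c + f n) * real n))"
proof (intro exI conjI)
  define Z where "Z n = a * real n * ln (real n)" for n
  define f where "f n = ln (X n) / Z n - c" for n
  have Z: "\<forall>\<^sub>F n in sequentially. Z n > 0"
    using eventually_ge_at_top[of 2] by eventually_elim (use a in \<open>simp add: Z_def\<close>)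
  show "\<forall>\<^sub>F n in sequentially. X n = real n powr (a * (c + f n) * real n)"
    using X Z
  proof eventually_elim
    case (elim n)
    have "a * (c + f n) * real n * ln (real n) = ln (X n) / Z n * Z n"
      unfolding f_def Z_def by (simp add: ac_simps)
    also have "\<dots> = ln (X n)"
      using elim(2) by simp
    finally have "exp (a * (c + f n) * real n * ln (real n)) = X n"
      using elim(1) by simp
    moreover have "n \<noteq> 0"
      using elim(2) unfolding Z_def by (rule contrapos_pn) simp
    ultimately show ?case
      by (simp add: powr_def)
  qed
  have "(\<lambda>n. ln (X n) / Z n) \<longlonglongrightarrow> c"
    using Z upper lower unfolding Z_def by (rule tendsto_divide_if_eventually_bounds)
  then have "(\<lambda>n. ln (X n) / Z n - c) \<longlonglongrightarrow> c - c"
    by (intro tendsto_diff tendsto_const)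
  then show "f \<longlonglongrightarrow> 0"
    unfolding f_def by simp
qed

theorem mainTheorem19:
  fixes r :: nat and c :: real
  assumes "r \<ge> 2" and "c \<ge> 1 / (real r - 1)"
  shows "(\<exists>f :: nat \<Rightarrow> real. f \<longlonglongrightarrow> 0 \<and>
           (\<forall>\<^sub>F n in sequentially.
              real (card (Q_class r c n)) = real n powr ((real r - 1) * (c + f n) * real n)))
       \<and> (\<exists>g :: nat \<Rightarrow> real. g \<longlonglongrightarrow> 0 \<and>
           (\<forall>\<^sub>F n in sequentially.
              real (card (S_class r c n)) = real n powr ((real r - 1) * (c + g n) * real n)))"
proof -
  have r1: "real r - 1 > 0"
    using assms(1) by simp
  then have "0 < 1 / (real r - 1)"
    by simp
  then have "c > 0"
    using assms(2) by linarith
  moreover have "1 \<le> c * (real r - 1)"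
    using assms(2) r1 by (simp add: divide_le_eq)
  ultimately have c: "c > 0" "1 / c \<le> real r - 1"
    by (auto simp: divide_le_eq mult.commute)
  note ln_Q_le_S = ln_card_Q_class_le_S_class[OF less_imp_le[OF c(1)], of r]
  note upper = eventually_ln_card_S_class_le[OF assms(1) less_imp_le[OF c(1)]]
  note lower = eventually_ln_card_Q_class_ge[OF assms(1) c]
  have pos: "real (card (Q_class r c n)) > 0" "real (card (S_class r c n)) > 0" for n
    using card_Q_class_pos[of c r n] card_Q_class_le_S_class[of r c n] c(1) by auto
  show ?thesis
  proof (intro conjI exists_vanishing_powr_exponent[OF r1])
    fix \<epsilon> :: real assume "\<epsilon> > 0"
    show "\<forall>\<^sub>F n in sequentially. ln (real (card (Q_class r c n))) \<le> (c + \<epsilon>) * ((real r - 1) * real n * ln (real n))"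
      using upper[OF \<open>\<epsilon> > 0\<close>] by eventually_elim (use ln_Q_le_S in \<open>blast intro: order_trans\<close>)
    show "\<forall>\<^sub>F n in sequentially. (c - \<epsilon>) * ((real r - 1) * real n * ln (real n)) \<le> ln (real (card (S_class r c n)))"
      using lower[OF \<open>\<epsilon> > 0\<close>] by eventually_elim (use ln_Q_le_S in \<open>blast intro: order_trans\<close>)
  qed (use pos upper lower in auto)
qed

end
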